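(* Suppose $D=dH-\sum_im_iE_i$ is an effective divisor class on $X$ with $\chi(D)\ge1$, and $A_t$ is an ample divisor with $2A_t\cdot D\le A_t\cdot K$. Let $\chi_{\max}$ be the maximal value of $\chi(D')$ among effective divisor classes $D'$ satisfying $2A_t\cdot D'\le A_t\cdot K$, and put $\ell=\chi_{\max}-\chi(D)$. Then $D$ is at most $\ell$ steps away from having balanced multiplicities. In particular, if additionally $10\le n\le 17$, then $\chi(D)=\chi_{\max}=1$ and $D$ is balanced.
   Context: Let $X$ be the blowup of $\mathbb{P}^2_{\mathbb{C}}$ at $n$ very general points, with $H$ the pullback of a line class, $E_i$ the exceptional divisors, $E=\sum_iE_i$, and $K=K_X=-3H+E$. For real $t$, $A_t=tH-E$. Write $\chi(D)=\chi(\mathcal{O}_X(D))$; effective means the class of an effective divisor (zero allowed). A divisor $D=dH-\sum_im_iE_i$ has balanced multiplicities (is balanced) if $|m_i-m_j|\le1$ for all $i,j$. If $D$ is not balanced, form a sequence $D=D_0,D_1,\dots,D_k$ by repeatedly increasing one of the smallest multiplicities by $1$ and decreasing one of the largest multiplicities by $1$, stopping at the first balanced divisor $D_k$; then $D$ is said to be $k$ steps away from having balanced multiplicities ($k$ is independent of choices; a balanced $D$ is $0$ steps away). *)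

theory Defs
  imports Complex_Main
begin

text \<open>Setting: X is the blowup of the complex projective plane at n points
 p 0, ..., p (n-1), given in the affine chart z = 1 as pairs of complex numbers.
 A divisor class D = dH - sum_i m_i E_i is encoded by d :: int and m :: nat => int
 (only the values m i for i < n matter).\<close>

text \<open>Very general points: the 2n affine coordinates are algebraically
 independent over the rationals (no nonzero integer polynomial vanishes on them).\<close>
definition coord :: "(nat \<Rightarrow> complex \<times> complex) \<Rightarrow> nat \<Rightarrow> complex" where
  "coord p k = (if even k then fst (p (k div 2)) else snd (p (k div 2)))"

definition very_general :: "nat \<Rightarrow> (nat \<Rightarrow> complex \<times> complex) \<Rightarrow> bool" where
  "very_general n p \<longleftrightarrow>
     (\<forall>(S :: (nat \<Rightarrow> nat) set) (c :: (nat \<Rightarrow> nat) \<Rightarrow> int).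
        finite S \<and> (\<forall>e\<in>S. \<forall>k. 2 * n \<le> k \<longrightarrow> e k = 0) \<and> (\<exists>e\<in>S. c e \<noteq> 0) \<longrightarrow>
        (\<Sum>e\<in>S. of_int (c e) * (\<Prod>k<2 * n. coord p k ^ e k)) \<noteq> 0)"

text \<open>A polynomial of degree at most dg in x, y is given by coefficients
 c (a, b) of x^a y^b, a + b <= dg. It vanishes to order at least mu at (u, v)
 iff all coefficients of total degree < mu of f(u + X, v + Y) vanish.\<close>
definition vanishes_to_order ::
  "nat \<Rightarrow> (nat \<times> nat \<Rightarrow> complex) \<Rightarrow> complex \<times> complex \<Rightarrow> int \<Rightarrow> bool" where
  "vanishes_to_order dg c pt mu \<longleftrightarrow>
     (\<forall>i j. int (i + j) < mu \<longrightarrow>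
        (\<Sum>a\<le>dg. \<Sum>b\<le>dg - a. c (a, b) * of_nat (a choose i) * of_nat (b choose j)
             * fst pt ^ (a - i) * snd pt ^ (b - j)) = 0)"

text \<open>Effective class dH - sum m_i E_i: there is a nonzero plane curve of degree d
 with multiplicity at least m_i at p_i (negative m_i impose no condition,
 the corresponding -m_i E_i being added as fixed components).\<close>
definition effective :: "nat \<Rightarrow> (nat \<Rightarrow> complex \<times> complex) \<Rightarrow> int \<Rightarrow> (nat \<Rightarrow> int) \<Rightarrow> bool" where
  "effective n p d m \<longleftrightarrow> 0 \<le> d \<and>
     (\<exists>c. (\<exists>a b. a + b \<le> nat d \<and> c (a, b) \<noteq> 0) \<and>
          (\<forall>k<n. vanishes_to_order (nat d) c (p k) (m k)))"

definition chi :: "nat \<Rightarrow> int \<Rightarrow> (nat \<Rightarrow> int) \<Rightarrow> int" where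
  "chi n d m = ((d + 1) * (d + 2)) div 2 - (\<Sum>i<n. (m i * (m i + 1)) div 2)"

text \<open>Intersection A_t . D for D = dH - sum m_i E_i, A_t = tH - E.\<close>
definition At_dot :: "nat \<Rightarrow> real \<Rightarrow> int \<Rightarrow> (nat \<Rightarrow> int) \<Rightarrow> real" where
  "At_dot n t d m = t * of_int d - of_int (\<Sum>i<n. m i)"

text \<open>A_t . K with K = -3H + E.\<close>
definition At_dot_K :: "nat \<Rightarrow> real \<Rightarrow> real" where
  "At_dot_K n t = real n - 3 * t"

text \<open>Ampleness of the R-divisor A_t (Nakai-Moishezon criterion for R-divisors):
 A_t^2 > 0 and A_t . D > 0 for every nonzero effective class D.\<close>
definition ample_At :: "nat \<Rightarrow> (nat \<Rightarrow> complex \<times> complex) \<Rightarrow> real \<Rightarrow> bool" where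
  "ample_At n p t \<longleftrightarrow> t ^ 2 - real n > 0 \<and>
     (\<forall>d m. effective n p d m \<and> \<not> (d = 0 \<and> (\<forall>i<n. m i = 0)) \<longrightarrow> At_dot n t d m > 0)"

definition balanced :: "nat \<Rightarrow> (nat \<Rightarrow> int) \<Rightarrow> bool" where
  "balanced n m \<longleftrightarrow> (\<forall>i<n. \<forall>j<n. \<bar>m i - m j\<bar> \<le> 1)"

definition bal_step :: "nat \<Rightarrow> (nat \<Rightarrow> int) \<Rightarrow> (nat \<Rightarrow> int) \<Rightarrow> bool" where
  "bal_step n m m' \<longleftrightarrow>
     (\<exists>i<n. \<exists>j<n. (\<forall>k<n. m k \<le> m i) \<and> (\<forall>k<n. m j \<le> m k) \<and>
                   m' = m(i := m i - 1, j := m j + 1))"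

definition steps_away :: "nat \<Rightarrow> (nat \<Rightarrow> int) \<Rightarrow> nat \<Rightarrow> bool" where
  "steps_away n m k \<longleftrightarrow>
     (\<exists>ms :: nat \<Rightarrow> nat \<Rightarrow> int. ms 0 = m \<and>
        (\<forall>s<k. \<not> balanced n (ms s) \<and> bal_step n (ms s) (ms (Suc s))) \<and>
        balanced n (ms k))"

end

(* A balancing step moves one unit of multiplicity from a largest to a smallest m_i; as
   these differ by at least 2, it keeps A_t.D fixed and raises chi by at least 1. A class
   dH - sum m_i E_i with d >= 0 and chi >= 1 is effective by a dimension count: there are
   more monomials of degree <= d than linear conditions imposed by the multiplicities.
   So each stage of the balancing of D is again admissible, and k steps raise chi by at
   least k, whence k <= chi_max - chi(D). Completing squares, Cauchy-Schwarz, A_t^2 > 0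
   and 2 A_t.D <= A_t.K give 8 chi(D) < n - 1 for every admissible class; this bounds
   chi_max, and forces chi_max <= 1 when n <= 17. *)

theory Submission
  imports Defs "HOL-Analysis.Convex"
begin

lemma homogeneous_linear_system_nontrivial_solution:
  fixes f :: "'e \<Rightarrow> 'v \<Rightarrow> 'a::field"
  assumes "finite E" and "finite V" and "card E < card V"
  shows "\<exists>x. (\<exists>v\<in>V. x v \<noteq> 0) \<and> (\<forall>e\<in>E. (\<Sum>v\<in>V. f e v * x v) = 0)"
  using assms
proof (induction E arbitrary: V f rule: finite_induct)
  case empty
  then obtain v where "v \<in> V"
    by fastforce
  then show ?case
    by (intro exI[of _ "\<lambda>_. 1"]) auto
next
  case (insert e E)
  show ?case
  proof (cases "\<forall>v\<in>V. f e v = 0")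
    case True
    with insert show ?thesis
      by fastforce
  next
    case False
    then obtain v0 where v0: "v0 \<in> V" "f e v0 \<noteq> 0"
      by auto
    define V' where "V' = V - {v0}"
    \<comment> \<open>Gaussian elimination: equation e eliminates the unknown v0 from the others.\<close>
    define f' where "f' = (\<lambda>e' v. f e' v - f e' v0 / f e v0 * f e v)"
    have "finite V'" and "card E < card V'"
      using v0 insert by (auto simp: V'_def)
    with insert.IH obtain x' where
      x': "\<exists>v\<in>V'. x' v \<noteq> 0" "\<forall>e'\<in>E. (\<Sum>v\<in>V'. f' e' v * x' v) = 0"
      by blast
    define x where "x = (\<lambda>v. if v = v0 then - (\<Sum>v\<in>V'. f e v * x' v) / f e v0 else x' v)"
    have split: "(\<Sum>v\<in>V. f e' v * x v) = f e' v0 * x v0 + (\<Sum>v\<in>V'. f e' v * x' v)" for e'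
    proof -
      have "(\<Sum>v\<in>V. f e' v * x v) = f e' v0 * x v0 + (\<Sum>v\<in>V'. f e' v * x v)"
        using v0 insert.prems by (simp add: V'_def sum.remove)
      also have "(\<Sum>v\<in>V'. f e' v * x v) = (\<Sum>v\<in>V'. f e' v * x' v)"
        by (intro sum.cong) (auto simp: x_def V'_def)
      finally show ?thesis .
    qed
    have "(\<Sum>v\<in>V. f e' v * x v) = 0" if "e' \<in> insert e E" for e'
    proof (cases "e' = e")
      case True
      show ?thesis
        unfolding True split using v0 by (simp add: x_def)
    next
      case False
      then have "(\<Sum>v\<in>V'. f' e' v * x' v) = 0"
        using x' that by auto
      then show ?thesis
        unfolding split using v0
        by (simp add: x_def f'_def algebra_simps sum_subtractf sum_distrib_left sum_divide_distrib)
    qed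
    moreover have "\<exists>v\<in>V. x v \<noteq> 0"
      using x' by (auto simp: x_def V'_def)
    ultimately show ?thesis
      by blast
  qed
qed

definition triangle :: "int \<Rightarrow> int" where
  "triangle x = x * (x + 1) div 2"

lemma two_mult_triangle: "2 * triangle x = x * (x + 1)"
proof -
  have "even (x * (x + 1))"
    by simp
  then show ?thesis
    unfolding triangle_def by simp
qed

lemma triangle_nonneg: "0 \<le> triangle x"
  by (simp add: triangle_def zero_le_mult_iff, arith)

lemma triangle_diff_one: "triangle (x - 1) = triangle x - x"
  using two_mult_triangle[of x] two_mult_triangle[of "x - 1"] by (simp add: algebra_simps)

lemma triangle_add_one: "triangle (x + 1) = triangle x + x + 1"
  using two_mult_triangle[of x] two_mult_triangle[of "x + 1"] by (simp add: algebra_simps)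

lemma triangle_of_nat: "triangle (int N) = int (N * (N + 1) div 2)"
  by (simp add: triangle_def zdiv_int algebra_simps)

lemma chi_eq_triangle: "chi n d m = triangle (d + 1) - (\<Sum>i<n. triangle (m i))"
  by (simp add: chi_def triangle_def algebra_simps)

lemma card_Sigma_lessThan_diff: "card (SIGMA a:{..<N}. {..<N - a}) = N * (N + 1) div 2"
proof (induction N)
  case (Suc N)
  have "card (SIGMA a:{..<Suc N}. {..<Suc N - a}) = (\<Sum>a<Suc N. Suc N - a)"
    by simp
  also have "\<dots> = (\<Sum>a<N. N - a) + Suc N"
    by (simp add: sum.lessThan_Suc_shift del: sum.lessThan_Suc)
  also have "(\<Sum>a<N. N - a) = N * (N + 1) div 2"
    using Suc by simp
  finally show ?case
    by simp
qed simp

lemma triangle_nat_le: "int (nat x * (nat x + 1) div 2) \<le> triangle x"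
  using triangle_of_nat[of "nat x"] triangle_nonneg[of x] by (cases "0 \<le> x") auto

lemma effective_if_chi_pos:
  assumes "0 \<le> d" and "1 \<le> chi n d m"
  shows "effective n p d m"
proof -
  \<comment> \<open>Unknowns: the coefficients of x^a y^b, a + b \<le> d. Equations: one for each
    Taylor coefficient of order i + j < m k at each point p k.\<close>
  define V where "V = (SIGMA a:{..nat d}. {..nat d - a})"
  define E where "E = (SIGMA k:{..<n}. SIGMA i:{..<nat (m k)}. {..<nat (m k) - i})"
  define f where "f = (\<lambda>(k, i, j) (a, b). of_nat (a choose i) * of_nat (b choose j)
       * fst (p k) ^ (a - i) * snd (p k) ^ (b - j) :: complex)"
  have "V = (SIGMA a:{..<Suc (nat d)}. {..<Suc (nat d) - a})"
    by (auto simp: V_def)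
  then have card_V: "int (card V) = triangle (d + 1)"
    using assms(1) triangle_of_nat[of "Suc (nat d)"] by (simp add: card_Sigma_lessThan_diff add.commute)
  have card_E: "card E = (\<Sum>k<n. nat (m k) * (nat (m k) + 1) div 2)"
    unfolding E_def by (simp add: card_Sigma_lessThan_diff)
  have "int (card E) \<le> (\<Sum>k<n. triangle (m k))"
    by (simp only: card_E of_nat_sum) (intro sum_mono triangle_nat_le)
  then have "card E < card V"
    using card_V assms(2) by (simp add: chi_eq_triangle)
  then obtain c where c: "\<exists>v\<in>V. c v \<noteq> 0" "\<forall>e\<in>E. (\<Sum>v\<in>V. f e v * c v) = 0"
    using homogeneous_linear_system_nontrivial_solution[of E V f]
    by (auto simp: V_def E_def)
  have "vanishes_to_order (nat d) c (p k) (m k)" if "k < n" for k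
    unfolding vanishes_to_order_def
  proof (intro allI impI)
    fix i j assume "int (i + j) < m k"
    then have "(k, i, j) \<in> E"
      using that by (auto simp: E_def)
    then have "(\<Sum>v\<in>V. f (k, i, j) v * c v) = 0"
      using c(2) by blast
    moreover have "(\<Sum>v\<in>V. f (k, i, j) v * c v) =
      (\<Sum>a\<le>nat d. \<Sum>b\<le>nat d - a. c (a, b) * of_nat (a choose i) * of_nat (b choose j)
             * fst (p k) ^ (a - i) * snd (p k) ^ (b - j))"
      unfolding V_def by (subst sum.Sigma) (auto simp: f_def algebra_simps intro!: sum.cong)
    ultimately show "(\<Sum>a\<le>nat d. \<Sum>b\<le>nat d - a. c (a, b) * of_nat (a choose i) * of_nat (b choose j)
             * fst (p k) ^ (a - i) * snd (p k) ^ (b - j)) = 0"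
      by simp
  qed
  moreover have "\<exists>a b. a + b \<le> nat d \<and> c (a, b) \<noteq> 0"
  proof -
    obtain a b where "(a, b) \<in> V" "c (a, b) \<noteq> 0"
      using c(1) by auto
    then show ?thesis
      by (intro exI[of _ a] exI[of _ b]) (auto simp: V_def)
  qed
  ultimately show ?thesis
    using assms(1) unfolding effective_def by blast
qed

lemma sum_comp_fun_upd:
  fixes g :: "'b \<Rightarrow> 'c::ab_group_add"
  assumes "finite A" and "i \<in> A"
  shows "(\<Sum>k\<in>A. g ((m(i := u)) k)) = (\<Sum>k\<in>A. g (m k)) - g (m i) + g u"
proof -
  have "(\<Sum>k\<in>A - {i}. g ((m(i := u)) k)) = (\<Sum>k\<in>A - {i}. g (m k))"
    by (intro sum.cong) auto
  then have "(\<Sum>k\<in>A. g ((m(i := u)) k)) = g u + (\<Sum>k\<in>A - {i}. g (m k))"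
    using assms by (simp add: sum.remove[of A i])
  also have "\<dots> = (\<Sum>k\<in>A. g (m k)) - g (m i) + g u"
    using assms by (simp add: sum.remove[of A i])
  finally show ?thesis .
qed

lemma bal_step_unbalancedE:
  assumes "\<not> balanced n m" and "bal_step n m m'"
  obtains i j where "i < n" "j < n" "i \<noteq> j" "m j + 2 \<le> m i"
    "m' = m(i := m i - 1, j := m j + 1)"
proof -
  obtain i j where ij: "i < n" "j < n" "\<forall>k<n. m k \<le> m i" "\<forall>k<n. m j \<le> m k"
    and m': "m' = m(i := m i - 1, j := m j + 1)"
    using assms(2) unfolding bal_step_def by blast
  obtain a b where "a < n" "b < n" "1 < \<bar>m a - m b\<bar>"
    using assms(1) unfolding balanced_def by force
  moreover have "m a \<le> m i" "m b \<le> m i" "m j \<le> m a" "m j \<le> m b"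
    using ij(3,4) \<open>a < n\<close> \<open>b < n\<close> by auto
  ultimately have "m j + 2 \<le> m i"
    by linarith
  with ij m' that show ?thesis
    by force
qed

lemma bal_step_sum_eq:
  assumes "\<not> balanced n m" and "bal_step n m m'"
  shows "(\<Sum>k<n. m' k) = (\<Sum>k<n. m k)"
proof -
  obtain i j where "i < n" "j < n" "i \<noteq> j" "m' = m(i := m i - 1, j := m j + 1)"
    using bal_step_unbalancedE[OF assms] .
  then show ?thesis
    using sum_comp_fun_upd[of "{..<n}" j id "m(i := m i - 1)"]
      sum_comp_fun_upd[of "{..<n}" i id m] by simp
qed

lemma bal_step_triangle_sum_less:
  assumes "\<not> balanced n m" and "bal_step n m m'"
  shows "(\<Sum>k<n. triangle (m' k)) < (\<Sum>k<n. triangle (m k))"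
proof -
  obtain i j where "i < n" "j < n" "i \<noteq> j" "m j + 2 \<le> m i"
    and m': "m' = m(i := m i - 1, j := m j + 1)"
    using bal_step_unbalancedE[OF assms] .
  then have "(\<Sum>k<n. triangle (m' k)) = (\<Sum>k<n. triangle (m k)) - m i + m j + 1"
    using sum_comp_fun_upd[of "{..<n}" j triangle "m(i := m i - 1)"]
      sum_comp_fun_upd[of "{..<n}" i triangle m]
    by (simp add: triangle_diff_one triangle_add_one)
  with \<open>m j + 2 \<le> m i\<close> show ?thesis
    by linarith
qed

lemma chi_less_bal_step:
  assumes "\<not> balanced n m" and "bal_step n m m'"
  shows "chi n d m < chi n d m'"
  using bal_step_triangle_sum_less[OF assms] by (simp add: chi_eq_triangle)

lemma bal_step_exists:
  assumes "\<not> balanced n m"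
  shows "\<exists>m'. bal_step n m m'"
proof -
  have fin: "finite (m ` {..<n})" "m ` {..<n} \<noteq> {}"
    using assms unfolding balanced_def by auto
  obtain i where i: "i < n" "m i = Max (m ` {..<n})"
    using Max_in[OF fin] by auto
  obtain j where j: "j < n" "m j = Min (m ` {..<n})"
    using Min_in[OF fin] by auto
  have "bal_step n m (m(i := m i - 1, j := m j + 1))"
    unfolding bal_step_def using fin i j by (intro exI[of _ i] exI[of _ j]) auto
  then show ?thesis
    by blast
qed

lemma steps_away_Suc:
  assumes "\<not> balanced n m" and "bal_step n m m'" and "steps_away n m' k"
  shows "steps_away n m (Suc k)"
proof -
  obtain ms where ms: "ms 0 = m'" "\<forall>s<k. \<not> balanced n (ms s) \<and> bal_step n (ms s) (ms (Suc s))"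
    "balanced n (ms k)"
    using assms(3) unfolding steps_away_def by blast
  let ?ms = "\<lambda>s. if s = 0 then m else ms (s - 1)"
  have "\<not> balanced n (?ms s) \<and> bal_step n (?ms s) (?ms (Suc s))" if "s < Suc k" for s
    using that ms assms(1,2) by (cases s) auto
  with ms(3) show ?thesis
    unfolding steps_away_def by (intro exI[of _ ?ms]) auto
qed

lemma steps_away_0_iff: "steps_away n m 0 \<longleftrightarrow> balanced n m"
  unfolding steps_away_def by auto

lemma steps_away_exists: "\<exists>k. steps_away n m k"
proof (induction "nat (\<Sum>k<n. triangle (m k))" arbitrary: m rule: less_induct)
  case less
  show ?case
  proof (cases "balanced n m")
    case True
    then have "steps_away n m 0"
      by (simp add: steps_away_0_iff)
    then show ?thesis ..
  next
    case False
    then obtain m' where m': "bal_step n m m'"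
      using bal_step_exists by blast
    have "0 \<le> (\<Sum>k<n. triangle (m' k))"
      by (simp add: sum_nonneg triangle_nonneg)
    then have "nat (\<Sum>k<n. triangle (m' k)) < nat (\<Sum>k<n. triangle (m k))"
      using bal_step_triangle_sum_less[OF False m'] by linarith
    then obtain k where "steps_away n m' k"
      using less.hyps by blast
    then show ?thesis
      using steps_away_Suc[OF False m'] by blast
  qed
qed

lemma steps_away_endpoint:
  assumes "steps_away n m k"
  shows "\<exists>m'. (\<Sum>i<n. m' i) = (\<Sum>i<n. m i) \<and> chi n d m + int k \<le> chi n d m'"
proof -
  obtain ms where ms: "ms 0 = m" "\<forall>s<k. \<not> balanced n (ms s) \<and> bal_step n (ms s) (ms (Suc s))"
    using assms unfolding steps_away_def by blast
  have "(\<Sum>i<n. ms s i) = (\<Sum>i<n. m i) \<and> chi n d m + int s \<le> chi n d (ms s)" if "s \<le> k" for s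
    using that
  proof (induction s)
    case (Suc s)
    then have "\<not> balanced n (ms s)" "bal_step n (ms s) (ms (Suc s))"
      using ms(2) by auto
    with Suc show ?case
      using bal_step_sum_eq chi_less_bal_step[where d = d] by fastforce
  qed (simp add: ms(1))
  then show ?thesis
    by blast
qed

lemma two_mult_chi: "2 * chi n d m = (d + 1) * (d + 2) - (\<Sum>k<n. m k * (m k + 1))"
  by (simp add: chi_eq_triangle right_diff_distrib sum_distrib_left two_mult_triangle algebra_simps)

lemma eight_chi_less:
  assumes "real n < t\<^sup>2" and "0 < t" and "0 \<le> d"
    and "2 * At_dot n t d m \<le> At_dot_K n t"
  shows "8 * chi n d m < int n - 1"
proof -
  define s where "s = real_of_int (\<Sum>k<n. m k)"
  define q where "q = (\<Sum>k<n. (real_of_int (m k))\<^sup>2)"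
  \<comment> \<open>Completing squares: with w = d + 3/2 and u = s + n/2, the inequality on D reads
    t w \<le> u, while Cauchy-Schwarz s^2 \<le> n q gives n (8 chi) \<le> 4 (n w^2 - u^2) + n (n - 1).\<close>
  define w where "w = real_of_int d + 3/2"
  define u where "u = s + real n / 2"
  have "real_of_int (2 * chi n d m) = real_of_int ((d + 1) * (d + 2) - (\<Sum>k<n. m k * (m k + 1)))"
    by (simp only: two_mult_chi)
  then have chi: "8 * real_of_int (chi n d m) = 4 * w\<^sup>2 - 1 - 4 * q - 4 * s"
    by (simp add: w_def q_def s_def power2_eq_square algebra_simps sum.distrib)
  have "s\<^sup>2 \<le> real n * q"
    using sum_squared_le_sum_of_squares[of "\<lambda>k. real_of_int (m k)" "{..<n}"]
    by (simp add: s_def q_def mult.commute)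
  then have "real n * (8 * real_of_int (chi n d m)) \<le> 4 * (real n * w\<^sup>2) - 4 * u\<^sup>2 + real n * (real n - 1)"
    unfolding chi u_def by (simp add: power2_eq_square algebra_simps)
  moreover have "real n * w\<^sup>2 < u\<^sup>2"
  proof -
    have "0 < w"
      using assms(3) by (simp add: w_def)
    then have "0 < t * w"
      using assms(2) by simp
    have "t * w \<le> u"
      using assms(4) by (simp add: w_def u_def s_def At_dot_def At_dot_K_def algebra_simps)
    then have "(t * w)\<^sup>2 \<le> u\<^sup>2"
      using \<open>0 < t * w\<close> by (intro power_mono) auto
    moreover have "real n * w\<^sup>2 < (t * w)\<^sup>2"
      using assms(1) \<open>0 < w\<close> by (simp add: power_mult_distrib)
    ultimately show ?thesis
      by linarith
  qed
  ultimately have "real n * (8 * real_of_int (chi n d m)) < real n * (real n - 1)"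
    by linarith
  then have "8 * real_of_int (chi n d m) < real n - 1"
    by (simp add: mult_less_cancel_left)
  then show ?thesis
    by linarith
qed

lemma ample_At_pos:
  assumes "ample_At n p t"
  shows "0 < t"
proof -
  have "effective n p 1 (\<lambda>_. 0)"
    by (rule effective_if_chi_pos) (simp_all add: chi_def)
  then have "0 < At_dot n t 1 (\<lambda>_. 0)"
    using assms unfolding ample_At_def by fastforce
  then show ?thesis
    by (simp add: At_dot_def)
qed

lemma int_cSup_mem:
  fixes X :: "int set"
  assumes "X \<noteq> {}" and "bdd_above X"
  shows "Sup X \<in> X"
proof -
  obtain x where "x \<in> X" "Sup X - 1 < x"
    using less_cSupE[of "Sup X - 1" X] assms(1) by auto
  moreover have "x \<le> Sup X"
    using cSup_upper[OF \<open>x \<in> X\<close> assms(2)] .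
  ultimately show ?thesis
    by (metis linorder_not_le order_antisym zle_diff1_eq)
qed

definition admissible_chis :: "nat \<Rightarrow> (nat \<Rightarrow> complex \<times> complex) \<Rightarrow> real \<Rightarrow> int set" where
  "admissible_chis n p t =
     {chi n d m | d m. effective n p d m \<and> 2 * At_dot n t d m \<le> At_dot_K n t}"

lemma admissible_chis_bound:
  assumes "ample_At n p t" and "c \<in> admissible_chis n p t"
  shows "8 * c < int n - 1"
proof -
  obtain d m where "c = chi n d m" "0 \<le> d" "2 * At_dot n t d m \<le> At_dot_K n t"
    using assms(2) unfolding admissible_chis_def effective_def by blast
  moreover have "real n < t\<^sup>2"
    using assms(1) unfolding ample_At_def by simp
  ultimately show ?thesis
    using eight_chi_less ample_At_pos[OF assms(1)] by blast
qed

lemma bdd_above_admissible_chis: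
  assumes "ample_At n p t"
  shows "bdd_above (admissible_chis n p t)"
  using admissible_chis_bound[OF assms] by (intro bdd_aboveI[of _ "int n"]) fastforce

lemma steps_away_le_Sup_admissible_chis:
  assumes "ample_At n p t" and "effective n p d m" and "1 \<le> chi n d m"
    and "2 * At_dot n t d m \<le> At_dot_K n t" and "steps_away n m k"
  shows "int k \<le> Sup (admissible_chis n p t) - chi n d m"
proof -
  have "0 \<le> d"
    using assms(2) unfolding effective_def by blast
  obtain m' where sum: "(\<Sum>i<n. m' i) = (\<Sum>i<n. m i)" and gain: "chi n d m + int k \<le> chi n d m'"
    using steps_away_endpoint[OF assms(5)] by blast
  have "effective n p d m'"
    using effective_if_chi_pos \<open>0 \<le> d\<close> gain assms(3) by simp
  moreover have "At_dot n t d m' = At_dot n t d m"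
    using sum by (simp add: At_dot_def)
  ultimately have "chi n d m' \<in> admissible_chis n p t"
    unfolding admissible_chis_def using assms(4) by (intro CollectI exI[of _ d] exI[of _ m']) simp
  then have "chi n d m' \<le> Sup (admissible_chis n p t)"
    using cSup_upper bdd_above_admissible_chis[OF assms(1)] by blast
  with gain show ?thesis
    by linarith
qed

theorem proposition4p4:
  fixes n :: nat and p :: "nat \<Rightarrow> complex \<times> complex"
    and d :: int and m :: "nat \<Rightarrow> int" and t :: real
  assumes vg: "very_general n p"
    and eff: "effective n p d m"
    and chi: "chi n d m \<ge> 1"
    and ample: "ample_At n p t"
    and ineq: "2 * At_dot n t d m \<le> At_dot_K n t"
  shows "\<exists>chimax.
     chimax \<in> {chi n d' m' | d' m'. effective n p d' m' \<and> 2 * At_dot n t d' m' \<le> At_dot_K n t} \<and>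
     (\<forall>d' m'. effective n p d' m' \<and> 2 * At_dot n t d' m' \<le> At_dot_K n t \<longrightarrow> chi n d' m' \<le> chimax) \<and>
     (\<exists>k. steps_away n m k) \<and>
     (\<forall>k. steps_away n m k \<longrightarrow> int k \<le> chimax - chi n d m) \<and>
     (10 \<le> n \<and> n \<le> 17 \<longrightarrow> chi n d m = 1 \<and> chimax = 1 \<and> balanced n m)"
proof -
  let ?C = "admissible_chis n p t"
  have "chi n d m \<in> ?C"
    unfolding admissible_chis_def using eff ineq by blast
  then have max: "Sup ?C \<in> ?C" "\<And>c. c \<in> ?C \<Longrightarrow> c \<le> Sup ?C"
    using int_cSup_mem cSup_upper bdd_above_admissible_chis[OF ample] by blast+
  note steps = steps_away_le_Sup_admissible_chis[OF ample eff chi ineq]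
  have "chi n d m = 1 \<and> Sup ?C = 1 \<and> balanced n m" if "10 \<le> n \<and> n \<le> 17"
  proof -
    obtain k where k: "steps_away n m k"
      using steps_away_exists by blast
    have "Sup ?C \<le> 1"
      using admissible_chis_bound[OF ample max(1)] that by linarith
    then have "chi n d m = 1" "Sup ?C = 1" "k = 0"
      using steps[OF k] chi max(2)[OF \<open>chi n d m \<in> ?C\<close>] by auto
    with k show ?thesis
      by (simp add: steps_away_0_iff)
  qed
  moreover have "\<forall>d' m'. effective n p d' m' \<and> 2 * At_dot n t d' m' \<le> At_dot_K n t \<longrightarrow> chi n d' m' \<le> Sup ?C"
    using max(2) unfolding admissible_chis_def by blast
  ultimately show ?thesis
    unfolding admissible_chis_def[symmetric] using max(1) steps steps_away_exists
    by (intro exI[of _ "Sup ?C"] conjI allI impI) auto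
qed

end
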